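(* Let $G$ be a group and $O'\subset O$ two equipments of $G$ with $O$ finite, such that the elements of $O'$ generate $G$. Then $a_{(G,O)}\le a_{(G,O')}$; in particular, if $a_{(G,O')}=1$ then $a_{(G,O)}=1$.
   Context: An equipment of $G$ is a subset which is a union of finitely many conjugacy classes of $G$ and does not contain $1$. For an equipment $O$ generating $G$, let $\widehat G_O$ be the group with generators $y_g$ ($g\in O$) and relations $y_h^{-1}y_gy_h=y_{h^{-1}gh}$ for all $g,h\in O$, and $\beta:\widehat G_O\to G$, $y_g\mapsto g$, with kernel $H$ (central). The ambiguity index is $a_{(G,O)}=|H\cap[\widehat G_O,\widehat G_O]|$. *)

theory Defs
  imports "HOL-Algebra.Algebra" "HOL-Library.Extended_Nat"
begin

definition conj_class :: "('a, 'b) monoid_scheme \<Rightarrow> 'a \<Rightarrow> 'a set" where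
  "conj_class G x = {inv\<^bsub>G\<^esub> g \<otimes>\<^bsub>G\<^esub> x \<otimes>\<^bsub>G\<^esub> g | g. g \<in> carrier G}"

definition equipment :: "('a, 'b) monoid_scheme \<Rightarrow> 'a set \<Rightarrow> bool" where
  "equipment G E \<longleftrightarrow> E \<subseteq> carrier G \<and> \<one>\<^bsub>G\<^esub> \<notin> E \<and>
     (\<exists>S. finite S \<and> S \<subseteq> carrier G \<and> E = (\<Union>x\<in>S. conj_class G x))"

(* Words in the generators y_g (g \<in> E): a letter (g, True) stands for y_g,
   (g, False) for y_g^{-1}.  hrel is the congruence defining the presented group. *)
inductive_set hrel :: "('a, 'b) monoid_scheme \<Rightarrow> 'a set \<Rightarrow>
    ((('a \<times> bool) list) \<times> (('a \<times> bool) list)) set"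
  for G :: "('a, 'b) monoid_scheme" and E :: "'a set" where
  hrefl: "w \<in> lists (E \<times> UNIV) \<Longrightarrow> (w, w) \<in> hrel G E"
| hsym: "(u, v) \<in> hrel G E \<Longrightarrow> (v, u) \<in> hrel G E"
| htrans: "(u, v) \<in> hrel G E \<Longrightarrow> (v, w) \<in> hrel G E \<Longrightarrow> (u, w) \<in> hrel G E"
| hctx: "(u, v) \<in> hrel G E \<Longrightarrow> a \<in> lists (E \<times> UNIV) \<Longrightarrow> b \<in> lists (E \<times> UNIV)
          \<Longrightarrow> (a @ u @ b, a @ v @ b) \<in> hrel G E"
| hcancel: "g \<in> E \<Longrightarrow> ([(g, e), (g, \<not> e)], []) \<in> hrel G E"
| hconj: "g \<in> E \<Longrightarrow> h \<in> E \<Longrightarrow>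
          ([(h, False), (g, True), (h, True)], [(inv\<^bsub>G\<^esub> h \<otimes>\<^bsub>G\<^esub> g \<otimes>\<^bsub>G\<^esub> h, True)]) \<in> hrel G E"

(* the group hat(G)_E = < y_g (g \<in> E) | y_h^{-1} y_g y_h = y_{h^{-1} g h} > *)
definition hatG :: "('a, 'b) monoid_scheme \<Rightarrow> 'a set \<Rightarrow> (('a \<times> bool) list set) monoid" where
  "hatG G E = \<lparr> carrier = lists (E \<times> UNIV) // hrel G E,
      monoid.mult = (\<lambda>A B. hrel G E `` ((\<lambda>(x, y). x @ y) ` (A \<times> B))),
      monoid.one = hrel G E `` {[]} \<rparr>"

definition word_eval :: "('a, 'b) monoid_scheme \<Rightarrow> ('a \<times> bool) list \<Rightarrow> 'a" where
  "word_eval G w = foldr (\<lambda>(g, e) acc. (if e then g else inv\<^bsub>G\<^esub> g) \<otimes>\<^bsub>G\<^esub> acc) w \<one>\<^bsub>G\<^esub>"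

definition hat_beta :: "('a, 'b) monoid_scheme \<Rightarrow> ('a \<times> bool) list set \<Rightarrow> 'a" where
  "hat_beta G A = word_eval G (SOME w. w \<in> A)"

definition hat_kernel :: "('a, 'b) monoid_scheme \<Rightarrow> 'a set \<Rightarrow> ('a \<times> bool) list set set" where
  "hat_kernel G E = {A \<in> carrier (hatG G E). hat_beta G A = \<one>\<^bsub>G\<^esub>}"

definition ambiguity_index :: "('a, 'b) monoid_scheme \<Rightarrow> 'a set \<Rightarrow> enat" where
  "ambiguity_index G E =
     (let S = hat_kernel G E \<inter> derived (hatG G E) (carrier (hatG G E))
      in if finite S then enat (card S) else \<infinity>)"

end

theory Submission
  imports Defs
begin

text \<open>The map \<open>\<beta>\<close> is a homomorphism with central kernel: the defining relations give
\<open>y\<^sub>g t = t y\<^sub>g'\<close> with \<open>g' = \<beta>(t)\<^sup>-\<^sup>1 g \<beta>(t)\<close>, so \<open>t\<close> commutes with every generator once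
\<open>\<beta>(t) = 1\<close>. The inclusion \<open>O' \<subseteq> O\<close> induces \<open>\<phi>\<close> from the group of \<open>O'\<close> to that of \<open>O\<close>
with \<open>\<beta> \<circ> \<phi> = \<beta>\<close>. As \<open>O'\<close> generates \<open>G\<close>, every element of the group of \<open>O\<close> is the image
of \<open>\<phi>\<close> times an element of \<open>ker \<beta>\<close>; central factors do not change commutators, so
the commutator subgroup for \<open>O\<close> is the image under \<open>\<phi>\<close> of that for \<open>O'\<close>. Hence the set
counted by \<open>a\<^bsub>(G,O)\<^esub>\<close> is contained in the image of the set counted by \<open>a\<^bsub>(G,O')\<^esub>\<close>, and both
sets contain the identity.\<close>

lemma word_eval_Nil [simp]: "word_eval G [] = \<one>\<^bsub>G\<^esub>"
  by (simp add: word_eval_def)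

lemma word_eval_Cons [simp]:
  "word_eval G ((g, e) # w) = (if e then g else inv\<^bsub>G\<^esub> g) \<otimes>\<^bsub>G\<^esub> word_eval G w"
  by (simp add: word_eval_def)

lemma (in group) word_eval_closed:
  "w \<in> lists (carrier G \<times> UNIV) \<Longrightarrow> word_eval G w \<in> carrier G"
  by (induction w) auto

lemma (in group) word_eval_append:
  "a \<in> lists (carrier G \<times> UNIV) \<Longrightarrow> b \<in> lists (carrier G \<times> UNIV) \<Longrightarrow>
   word_eval G (a @ b) = word_eval G a \<otimes> word_eval G b"
  by (induction a) (auto simp: m_assoc word_eval_closed in_lists_conv_set)

lemma (in group) generate_subset_word_eval_image:
  assumes "S \<subseteq> carrier G"
  shows "generate G S \<subseteq> word_eval G ` lists (S \<times> UNIV)"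
proof
  fix x assume "x \<in> generate G S"
  then show "x \<in> word_eval G ` lists (S \<times> UNIV)"
  proof (induction rule: generate.induct)
    case one
    show ?case by (rule image_eqI[of _ _ "[]"]) auto
  next
    case (incl h)
    then show ?case using assms by (intro image_eqI[of _ _ "[(h, True)]"]) auto
  next
    case (inv h)
    then show ?case using assms by (intro image_eqI[of _ _ "[(h, False)]"]) auto
  next
    case (eng h1 h2)
    then obtain w1 w2 where w: "w1 \<in> lists (S \<times> UNIV)" "w2 \<in> lists (S \<times> UNIV)"
      and h: "h1 = word_eval G w1" "h2 = word_eval G w2" by blast
    have "w1 \<in> lists (carrier G \<times> UNIV)" "w2 \<in> lists (carrier G \<times> UNIV)"
      using w assms by auto
    then show ?case using w h by (intro image_eqI[of _ _ "w1 @ w2"]) (auto simp: word_eval_append)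
  qed
qed

definition word_inv :: "('a \<times> bool) list \<Rightarrow> ('a \<times> bool) list" where
  "word_inv w = rev (map (\<lambda>(g, e). (g, \<not> e)) w)"

lemma word_inv_lists: "w \<in> lists (S \<times> UNIV) \<Longrightarrow> word_inv w \<in> lists (S \<times> UNIV)"
  by (auto simp: word_inv_def)

lemma (in group) commutator_mult_central:
  assumes "a \<in> carrier G" "b \<in> carrier G" "z \<in> carrier G" "z' \<in> carrier G"
    and "\<And>x. x \<in> carrier G \<Longrightarrow> z \<otimes> x = x \<otimes> z"
    and "\<And>x. x \<in> carrier G \<Longrightarrow> z' \<otimes> x = x \<otimes> z'"
  shows "(a \<otimes> z) \<otimes> (b \<otimes> z') \<otimes> inv (a \<otimes> z) \<otimes> inv (b \<otimes> z') = a \<otimes> b \<otimes> inv a \<otimes> inv b"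
proof -
  have "(a \<otimes> z) \<otimes> (b \<otimes> z') \<otimes> inv (a \<otimes> z) \<otimes> inv (b \<otimes> z')
      = a \<otimes> (z \<otimes> (b \<otimes> z')) \<otimes> inv z \<otimes> inv a \<otimes> (inv z' \<otimes> inv b)"
    using assms(1-4) by (simp add: inv_mult_group m_assoc)
  also have "\<dots> = a \<otimes> b \<otimes> (z' \<otimes> inv a) \<otimes> inv z' \<otimes> inv b"
    using assms(1-4) assms(5)[of "b \<otimes> z'"] by (simp add: m_assoc)
  also have "\<dots> = a \<otimes> b \<otimes> inv a \<otimes> inv b"
    using assms(1-4) assms(6)[of "inv a"] by (simp add: m_assoc)
  finally show ?thesis .
qed

lemma (in group) mult_eq_mult_imp_inv_swap:
  assumes "a \<in> carrier G" "b \<in> carrier G" "c \<in> carrier G" and "a \<otimes> b = b \<otimes> c"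
  shows "c \<otimes> inv b = inv b \<otimes> a"
proof -
  have "inv b \<otimes> (a \<otimes> b) = inv b \<otimes> (b \<otimes> c)" by (simp add: assms(4))
  also have "\<dots> = c" using assms(2,3) by (simp add: m_assoc[symmetric])
  finally show ?thesis using assms(1-3) by (auto simp: m_assoc)
qed

lemma (in group) derived_carrier_eq_if_central_product:
  assumes K: "K \<subseteq> carrier G"
    and decomp: "\<And>x. x \<in> carrier G \<Longrightarrow>
      \<exists>k\<in>K. \<exists>z\<in>carrier G. x = k \<otimes> z \<and> (\<forall>y\<in>carrier G. z \<otimes> y = y \<otimes> z)"
  shows "derived G (carrier G) = derived G K"
proof
  have "derived_set G (carrier G) \<subseteq> derived_set G K"
  proof
    fix c assume "c \<in> derived_set G (carrier G)"
    then obtain x1 x2 where x: "x1 \<in> carrier G" "x2 \<in> carrier G"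
      and c: "c = x1 \<otimes> x2 \<otimes> inv x1 \<otimes> inv x2" by blast
    obtain k1 z1 where k1: "k1 \<in> K" "z1 \<in> carrier G" "x1 = k1 \<otimes> z1"
      and z1: "\<forall>y\<in>carrier G. z1 \<otimes> y = y \<otimes> z1"
      using decomp[OF x(1)] by blast
    obtain k2 z2 where k2: "k2 \<in> K" "z2 \<in> carrier G" "x2 = k2 \<otimes> z2"
      and z2: "\<forall>y\<in>carrier G. z2 \<otimes> y = y \<otimes> z2"
      using decomp[OF x(2)] by blast
    have "c = k1 \<otimes> k2 \<otimes> inv k1 \<otimes> inv k2"
      using c k1 k2 z1 z2 K by (simp add: commutator_mult_central subsetD)
    then show "c \<in> derived_set G K" using k1 k2 by blast
  qed
  then show "derived G (carrier G) \<subseteq> derived G K"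
    unfolding derived_def by (rule mono_generate)
  show "derived G K \<subseteq> derived G (carrier G)" using K by (rule mono_derived)
qed

lemma enat_card_le_if_subset_image:
  assumes "S \<subseteq> f ` T"
  shows "(if finite S then enat (card S) else \<infinity>) \<le> (if finite T then enat (card T) else \<infinity>)"
proof (cases "finite T")
  case True
  then have "finite S" using assms finite_surj by blast
  moreover have "card S \<le> card T"
    using card_mono[OF finite_imageI[OF True] assms] card_image_le[OF True, of f] by linarith
  ultimately show ?thesis using True by simp
qed simp

locale conj_invariant = group G for G :: "('a, 'b) monoid_scheme" (structure) +
  fixes E :: "'a set"
  assumes subset_carrier: "E \<subseteq> carrier G"
    and conj_closed: "\<lbrakk>g \<in> E; h \<in> carrier G\<rbrakk> \<Longrightarrow> inv h \<otimes> g \<otimes> h \<in> E"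

lemma (in group) equipment_imp_conj_invariant:
  assumes "equipment G E"
  shows "conj_invariant G E"
proof
  from assms obtain S where S: "S \<subseteq> carrier G" "E = (\<Union>x\<in>S. conj_class G x)"
    and E: "E \<subseteq> carrier G"
    unfolding equipment_def by blast
  show "E \<subseteq> carrier G" by (rule E)
  fix g h assume g: "g \<in> E" and h: "h \<in> carrier G"
  then obtain x a where xa: "x \<in> S" "a \<in> carrier G" "g = inv a \<otimes> x \<otimes> a"
    using S(2) unfolding conj_class_def by blast
  have "inv h \<otimes> g \<otimes> h = inv (a \<otimes> h) \<otimes> x \<otimes> (a \<otimes> h)"
    using xa h S(1) by (simp add: inv_mult_group m_assoc subsetD)
  then have "inv h \<otimes> g \<otimes> h \<in> conj_class G x"
    unfolding conj_class_def using xa h by blast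
  then show "inv h \<otimes> g \<otimes> h \<in> E" using S(2) xa by blast
qed

context conj_invariant
begin

abbreviation "W \<equiv> lists (E \<times> (UNIV :: bool set))"
abbreviation "HG \<equiv> hatG G E"

definition cls :: "('a \<times> bool) list \<Rightarrow> ('a \<times> bool) list set" where
  "cls w = hrel G E `` {w}"

lemma words_in_carrier_lists: "w \<in> W \<Longrightarrow> w \<in> lists (carrier G \<times> UNIV)"
  using subset_carrier by auto

lemma hrel_words: "(u, v) \<in> hrel G E \<Longrightarrow> u \<in> W \<and> v \<in> W"
proof (induction rule: hrel.induct)
  case (hconj g h)
  then show ?case using conj_closed[of g h] subset_carrier by auto
qed auto

lemma equiv_hrel: "equiv W (hrel G E)"
proof (rule equivI)
  show "refl_on W (hrel G E)"
    unfolding refl_on_def by (auto dest: hrel_words intro: hrel.hrefl)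
  show "hrel G E \<subseteq> W \<times> W" by (rule subrelI) (auto dest: hrel_words)
  show "sym (hrel G E)" unfolding sym_def by (blast intro: hrel.hsym)
  show "trans (hrel G E)" unfolding trans_def by (blast intro: hrel.htrans)
qed

lemma hrel_word_eval: "(u, v) \<in> hrel G E \<Longrightarrow> word_eval G u = word_eval G v"
proof (induction rule: hrel.induct)
  case (hctx u v a b)
  then show ?case using hrel_words[OF hctx(1)] words_in_carrier_lists
    by (simp add: word_eval_append)
next
  case (hconj g h)
  then have "g \<in> carrier G" "h \<in> carrier G" using subset_carrier by auto
  then show ?case by (simp add: m_assoc)
next
  case (hcancel g e)
  then show ?case using subset_carrier by auto
qed auto

lemma hrel_append: "(u, v) \<in> hrel G E \<Longrightarrow> (u', v') \<in> hrel G E \<Longrightarrow> (u @ u', v @ v') \<in> hrel G E"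
proof -
  assume uv: "(u, v) \<in> hrel G E" and uv': "(u', v') \<in> hrel G E"
  have "([] @ u @ u', [] @ v @ u') \<in> hrel G E" using uv hrel_words[OF uv'] by (intro hrel.hctx) auto
  moreover have "(v @ u' @ [], v @ v' @ []) \<in> hrel G E" using uv' hrel_words[OF uv] by (intro hrel.hctx) auto
  ultimately show ?thesis by (auto intro: hrel.htrans)
qed

lemma cls_in_carrier: "w \<in> W \<Longrightarrow> cls w \<in> carrier HG"
  unfolding cls_def hatG_def by (auto intro: quotientI)

lemma carrier_hatG_cases:
  assumes "A \<in> carrier HG"
  obtains w where "w \<in> W" "A = cls w"
  using assms that unfolding cls_def hatG_def by (auto elim!: quotientE)

lemma self_in_cls: "w \<in> W \<Longrightarrow> w \<in> cls w"
  unfolding cls_def by (rule equiv_class_self[OF equiv_hrel])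

lemma cls_eq_iff: "u \<in> W \<Longrightarrow> v \<in> W \<Longrightarrow> cls u = cls v \<longleftrightarrow> (u, v) \<in> hrel G E"
  unfolding cls_def by (rule eq_equiv_class_iff[OF equiv_hrel])

lemma cls_mult: "u \<in> W \<Longrightarrow> v \<in> W \<Longrightarrow> cls u \<otimes>\<^bsub>HG\<^esub> cls v = cls (u @ v)"
proof -
  assume u: "u \<in> W" and v: "v \<in> W"
  have "hrel G E `` ((\<lambda>(x, y). x @ y) ` (cls u \<times> cls v)) = hrel G E `` {u @ v}"
  proof (intro equalityI subsetI)
    fix z assume "z \<in> hrel G E `` ((\<lambda>(x, y). x @ y) ` (cls u \<times> cls v))"
    then obtain x y where "(u, x) \<in> hrel G E" "(v, y) \<in> hrel G E" "(x @ y, z) \<in> hrel G E"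
      unfolding cls_def by auto
    then show "z \<in> hrel G E `` {u @ v}" by (auto intro: hrel_append hrel.htrans)
  next
    fix z assume "z \<in> hrel G E `` {u @ v}"
    with self_in_cls[OF u] self_in_cls[OF v]
    show "z \<in> hrel G E `` ((\<lambda>(x, y). x @ y) ` (cls u \<times> cls v))" by blast
  qed
  then show ?thesis unfolding hatG_def cls_def by simp
qed

lemma one_hatG: "\<one>\<^bsub>HG\<^esub> = cls []"
  unfolding hatG_def cls_def by simp

lemma word_inv_append_self: "w \<in> W \<Longrightarrow> (word_inv w @ w, []) \<in> hrel G E"
proof (induction w)
  case Nil
  then show ?case by (simp add: word_inv_def hrel.hrefl)
next
  case (Cons x w)
  obtain g e where x: "x = (g, e)" by (cases x)
  have g: "g \<in> E" and w: "w \<in> W" using Cons.prems x by auto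
  have "(word_inv w @ [(g, \<not> e), (g, e)] @ w, word_inv w @ [] @ w) \<in> hrel G E"
    using hrel.hcancel[OF g, of "\<not> e"] word_inv_lists[OF w] w by (intro hrel.hctx) auto
  moreover have "word_inv (x # w) @ x # w = word_inv w @ [(g, \<not> e), (g, e)] @ w"
    by (simp add: word_inv_def x)
  ultimately show ?case using Cons.IH[OF w] by (auto intro: hrel.htrans)
qed

lemma group_hatG: "group HG"
proof (rule groupI)
  fix x y assume "x \<in> carrier HG" "y \<in> carrier HG"
  then obtain u v where "u \<in> W" "v \<in> W" "x = cls u" "y = cls v"
    by (metis carrier_hatG_cases)
  then show "x \<otimes>\<^bsub>HG\<^esub> y \<in> carrier HG" by (simp add: cls_mult cls_in_carrier)
next
  show "\<one>\<^bsub>HG\<^esub> \<in> carrier HG" by (simp add: one_hatG cls_in_carrier)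
next
  fix x y z assume "x \<in> carrier HG" "y \<in> carrier HG" "z \<in> carrier HG"
  then obtain u v w where "u \<in> W" "v \<in> W" "w \<in> W" "x = cls u" "y = cls v" "z = cls w"
    by (metis carrier_hatG_cases)
  then show "x \<otimes>\<^bsub>HG\<^esub> y \<otimes>\<^bsub>HG\<^esub> z = x \<otimes>\<^bsub>HG\<^esub> (y \<otimes>\<^bsub>HG\<^esub> z)"
    by (simp add: cls_mult)
next
  fix x assume "x \<in> carrier HG"
  then obtain w where "w \<in> W" "x = cls w" by (rule carrier_hatG_cases)
  then show "\<one>\<^bsub>HG\<^esub> \<otimes>\<^bsub>HG\<^esub> x = x" by (simp add: cls_mult one_hatG)
next
  fix x assume "x \<in> carrier HG"
  then obtain w where w: "w \<in> W" "x = cls w" by (rule carrier_hatG_cases)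
  have "cls (word_inv w) \<otimes>\<^bsub>HG\<^esub> x = \<one>\<^bsub>HG\<^esub>"
    using w word_inv_lists[OF w(1)] word_inv_append_self[OF w(1)]
    by (simp add: cls_mult one_hatG cls_eq_iff)
  then show "\<exists>y\<in>carrier HG. y \<otimes>\<^bsub>HG\<^esub> x = \<one>\<^bsub>HG\<^esub>"
    using cls_in_carrier word_inv_lists[OF w(1)] by blast
qed

end

sublocale conj_invariant \<subseteq> hat: group "hatG G E"
  by (rule group_hatG)

context conj_invariant
begin

lemma cls_Cons: "x \<in> E \<times> UNIV \<Longrightarrow> w \<in> W \<Longrightarrow> cls (x # w) = cls [x] \<otimes>\<^bsub>HG\<^esub> cls w"
  using cls_mult[of "[x]" w] by simp

lemma hat_beta_cls: "w \<in> W \<Longrightarrow> hat_beta G (cls w) = word_eval G w"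
proof -
  assume w: "w \<in> W"
  have "(SOME v. v \<in> cls w) \<in> cls w" using self_in_cls[OF w] by (rule someI)
  then have "(w, SOME v. v \<in> cls w) \<in> hrel G E" by (simp add: cls_def)
  then show ?thesis unfolding hat_beta_def by (metis hrel_word_eval)
qed

lemma hat_beta_hom: "group_hom HG G (hat_beta G)"
proof -
  have "hat_beta G \<in> hom HG G"
  proof (rule homI)
    fix x assume "x \<in> carrier HG"
    then obtain w where "w \<in> W" "x = cls w" by (rule carrier_hatG_cases)
    then show "hat_beta G x \<in> carrier G"
      by (simp add: hat_beta_cls word_eval_closed words_in_carrier_lists)
  next
    fix x y assume "x \<in> carrier HG" "y \<in> carrier HG"
    then obtain u v where "u \<in> W" "v \<in> W" "x = cls u" "y = cls v"
      by (metis carrier_hatG_cases)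
    then show "hat_beta G (x \<otimes>\<^bsub>HG\<^esub> y) = hat_beta G x \<otimes> hat_beta G y"
      by (simp add: cls_mult hat_beta_cls word_eval_append words_in_carrier_lists)
  qed
  then show ?thesis by (intro group_hom.intro group_hom_axioms.intro hat.is_group is_group)
qed

abbreviation ygen :: "'a \<Rightarrow> ('a \<times> bool) list set" where
  "ygen g \<equiv> cls [(g, True)]"

lemma ygen_in_carrier [simp]: "g \<in> E \<Longrightarrow> ygen g \<in> carrier HG"
  by (simp add: cls_in_carrier)

lemma cls_inv_letter: "g \<in> E \<Longrightarrow> cls [(g, False)] = inv\<^bsub>HG\<^esub> ygen g"
proof -
  assume g: "g \<in> E"
  have "cls [(g, False)] \<otimes>\<^bsub>HG\<^esub> ygen g = \<one>\<^bsub>HG\<^esub>"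
    using g hrel.hcancel[of g E False G] by (simp add: cls_mult one_hatG cls_eq_iff)
  then show ?thesis using g by (intro hat.inv_equality[symmetric]) (auto simp: cls_in_carrier)
qed

lemma ygen_mult_ygen:
  assumes g: "g \<in> E" and h: "h \<in> E"
  shows "ygen g \<otimes>\<^bsub>HG\<^esub> ygen h = ygen h \<otimes>\<^bsub>HG\<^esub> ygen (inv h \<otimes> g \<otimes> h)"
proof -
  have "inv\<^bsub>HG\<^esub> ygen h \<otimes>\<^bsub>HG\<^esub> ygen g \<otimes>\<^bsub>HG\<^esub> ygen h = cls [(h, False), (g, True), (h, True)]"
    using g h by (simp add: cls_inv_letter[symmetric] cls_mult)
  also have "\<dots> = ygen (inv h \<otimes> g \<otimes> h)"
    using hrel.hconj[OF g h] hrel_words[OF hrel.hconj[OF g h]] by (simp add: cls_eq_iff)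
  finally show ?thesis
    using g h conj_closed[of g h] subset_carrier
    by (simp add: hat.m_assoc hat.inv_solve_left' subsetD)
qed

lemma ygen_mult_letter:
  assumes g: "g \<in> E" and x: "x \<in> E \<times> UNIV"
  defines "l \<equiv> word_eval G [x]"
  shows "ygen g \<otimes>\<^bsub>HG\<^esub> cls [x] = cls [x] \<otimes>\<^bsub>HG\<^esub> ygen (inv l \<otimes> g \<otimes> l)"
proof -
  obtain h e where x_eq: "x = (h, e)" by (cases x)
  have h: "h \<in> E" using x x_eq by auto
  have hc: "h \<in> carrier G" and gc: "g \<in> carrier G" using g h subset_carrier by auto
  show ?thesis
  proof (cases e)
    case True
    then show ?thesis using ygen_mult_ygen[OF g h] hc by (simp add: x_eq l_def)
  next
    case False
    let ?g' = "h \<otimes> g \<otimes> inv h"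
    have g': "?g' \<in> E" using conj_closed[OF g, of "inv h"] hc by simp
    have "ygen ?g' \<otimes>\<^bsub>HG\<^esub> ygen h = ygen h \<otimes>\<^bsub>HG\<^esub> ygen (inv h \<otimes> ?g' \<otimes> h)"
      by (rule ygen_mult_ygen[OF g' h])
    also have "inv h \<otimes> ?g' \<otimes> h = g" using hc gc by (simp add: m_assoc inv_solve_left')
    finally have "ygen g \<otimes>\<^bsub>HG\<^esub> inv\<^bsub>HG\<^esub> ygen h = inv\<^bsub>HG\<^esub> ygen h \<otimes>\<^bsub>HG\<^esub> ygen ?g'"
      using g h g' by (intro hat.mult_eq_mult_imp_inv_swap) simp_all
    then show ?thesis using False hc gc h by (simp add: x_eq l_def cls_inv_letter m_assoc)
  qed
qed

lemma ygen_mult_cls: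
  assumes "t \<in> W" and "g \<in> E"
  shows "ygen g \<otimes>\<^bsub>HG\<^esub> cls t = cls t \<otimes>\<^bsub>HG\<^esub> ygen (inv (word_eval G t) \<otimes> g \<otimes> word_eval G t)"
  using assms
proof (induction t arbitrary: g rule: list.induct)
  case Nil
  then have "g \<in> carrier G" using subset_carrier by auto
  then show ?case using Nil by (simp add: one_hatG[symmetric] cls_in_carrier)
next
  case (Cons x t)
  have x: "x \<in> E \<times> UNIV" and t: "t \<in> W" and g: "g \<in> E" using Cons.prems by auto
  have xc: "cls [x] \<in> carrier HG" and tc: "cls t \<in> carrier HG"
    using cls_in_carrier[OF lists.Cons[OF x lists.Nil]] cls_in_carrier[OF t] .
  let ?l = "word_eval G [x]" and ?r = "word_eval G t"
  have l: "?l \<in> carrier G" and r: "?r \<in> carrier G"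
    using word_eval_closed words_in_carrier_lists lists.Cons[OF x lists.Nil] t by blast+
  let ?g' = "inv ?l \<otimes> g \<otimes> ?l"
  have g': "?g' \<in> E" using conj_closed[OF g l] .
  have yc: "ygen ?g' \<in> carrier HG" "ygen (inv ?r \<otimes> ?g' \<otimes> ?r) \<in> carrier HG"
    using g' conj_closed[OF g' r] by (auto intro: cls_in_carrier)
  have "ygen g \<otimes>\<^bsub>HG\<^esub> cls (x # t) = ygen g \<otimes>\<^bsub>HG\<^esub> cls [x] \<otimes>\<^bsub>HG\<^esub> cls t"
    using xc tc g by (simp add: cls_Cons[OF x t] hat.m_assoc cls_in_carrier)
  also have "\<dots> = cls [x] \<otimes>\<^bsub>HG\<^esub> (ygen ?g' \<otimes>\<^bsub>HG\<^esub> cls t)"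
    using ygen_mult_letter[OF g x] xc tc yc by (simp add: hat.m_assoc)
  also have "\<dots> = cls [x] \<otimes>\<^bsub>HG\<^esub> (cls t \<otimes>\<^bsub>HG\<^esub> ygen (inv ?r \<otimes> ?g' \<otimes> ?r))"
    by (simp add: Cons.IH[OF t g'])
  also have "\<dots> = cls (x # t) \<otimes>\<^bsub>HG\<^esub> ygen (inv ?r \<otimes> ?g' \<otimes> ?r)"
    using xc tc yc by (simp add: cls_Cons[OF x t] hat.m_assoc)
  also have "inv ?r \<otimes> ?g' \<otimes> ?r = inv (word_eval G (x # t)) \<otimes> g \<otimes> word_eval G (x # t)"
  proof -
    have "word_eval G (x # t) = ?l \<otimes> ?r"
      using word_eval_append[OF words_in_carrier_lists[OF lists.Cons[OF x lists.Nil]]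
          words_in_carrier_lists[OF t]] by simp
    then show ?thesis using l r g subset_carrier by (simp add: inv_mult_group m_assoc subsetD)
  qed
  finally show ?case .
qed

lemma commute_if_commute_letters:
  assumes a: "a \<in> carrier HG"
    and letters: "\<And>x. x \<in> E \<times> UNIV \<Longrightarrow> a \<otimes>\<^bsub>HG\<^esub> cls [x] = cls [x] \<otimes>\<^bsub>HG\<^esub> a"
    and b: "b \<in> carrier HG"
  shows "a \<otimes>\<^bsub>HG\<^esub> b = b \<otimes>\<^bsub>HG\<^esub> a"
proof -
  have "a \<otimes>\<^bsub>HG\<^esub> cls w = cls w \<otimes>\<^bsub>HG\<^esub> a" if "w \<in> W" for w
    using that
  proof (induction w rule: list.induct)
    case Nil
    then show ?case using a by (simp add: one_hatG[symmetric])
  next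
    case (Cons x w)
    have x: "x \<in> E \<times> UNIV" and w: "w \<in> W" using Cons.prems by auto
    have xc: "cls [x] \<in> carrier HG" and wc: "cls w \<in> carrier HG"
      using cls_in_carrier[OF lists.Cons[OF x lists.Nil]] cls_in_carrier[OF w] .
    have "a \<otimes>\<^bsub>HG\<^esub> cls (x # w) = cls [x] \<otimes>\<^bsub>HG\<^esub> a \<otimes>\<^bsub>HG\<^esub> cls w"
      using xc wc a letters[OF x] by (simp add: cls_Cons[OF x w] hat.m_assoc[symmetric])
    also have "\<dots> = cls (x # w) \<otimes>\<^bsub>HG\<^esub> a"
      using xc wc a Cons.IH[OF w] by (simp add: cls_Cons[OF x w] hat.m_assoc)
    finally show ?case .
  qed
  then show ?thesis using b by (metis carrier_hatG_cases)
qed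

lemma hat_kernel_central:
  assumes a: "a \<in> hat_kernel G E" and b: "b \<in> carrier HG"
  shows "a \<otimes>\<^bsub>HG\<^esub> b = b \<otimes>\<^bsub>HG\<^esub> a"
proof (rule commute_if_commute_letters[OF _ _ b])
  have ac: "a \<in> carrier HG" and beta_a: "hat_beta G a = \<one>"
    using a by (simp_all add: hat_kernel_def)
  obtain t where t: "t \<in> W" "a = cls t" using ac by (rule carrier_hatG_cases)
  have eval: "word_eval G t = \<one>" using beta_a t by (simp add: hat_beta_cls)
  show "a \<in> carrier HG" by (rule ac)
  fix x :: "'a \<times> bool" assume "x \<in> E \<times> UNIV"
  then obtain g e where g: "g \<in> E" and x_eq: "x = (g, e)" by auto
  have comm: "a \<otimes>\<^bsub>HG\<^esub> ygen g = ygen g \<otimes>\<^bsub>HG\<^esub> a"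
    using ygen_mult_cls[OF t(1) g] eval g subset_carrier t by (auto simp: subsetD)
  show "a \<otimes>\<^bsub>HG\<^esub> cls [x] = cls [x] \<otimes>\<^bsub>HG\<^esub> a"
  proof (cases e)
    case True
    then show ?thesis using comm x_eq by simp
  next
    case False
    have "a \<otimes>\<^bsub>HG\<^esub> inv\<^bsub>HG\<^esub> ygen g = inv\<^bsub>HG\<^esub> ygen g \<otimes>\<^bsub>HG\<^esub> a"
      using comm g ac by (intro hat.mult_eq_mult_imp_inv_swap) simp_all
    then show ?thesis using False x_eq g by (simp add: cls_inv_letter)
  qed
qed

lemma one_le_ambiguity_index: "1 \<le> ambiguity_index G E"
proof -
  interpret beta: group_hom HG G "hat_beta G" by (rule hat_beta_hom)
  have "\<one>\<^bsub>HG\<^esub> \<in> hat_kernel G E \<inter> derived HG (carrier HG)"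
    using hat.derived_is_subgroup[of "carrier HG"] subgroup.one_closed
    by (auto simp: hat_kernel_def)
  then show ?thesis
    unfolding ambiguity_index_def Let_def
    by (auto simp: one_enat_def Suc_le_eq card_gt_0_iff)
qed

end

locale conj_invariant_incl = A: conj_invariant G E + B: conj_invariant G E'
  for G :: "('a, 'b) monoid_scheme" (structure) and E E' +
  assumes incl: "E' \<subseteq> E"
begin

definition hat_incl :: "('a \<times> bool) list set \<Rightarrow> ('a \<times> bool) list set" where
  "hat_incl Q = hrel G E `` Q"

lemma words_mono: "lists (E' \<times> UNIV) \<subseteq> lists (E \<times> UNIV)"
  using incl by (intro lists_mono) auto

lemma hrel_mono: "(u, v) \<in> hrel G E' \<Longrightarrow> (u, v) \<in> hrel G E"
proof (induction rule: hrel.induct)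
  case (hrefl w)
  then show ?case using words_mono by (intro hrel.hrefl) auto
next
  case (hsym u v)
  then show ?case by (blast intro: hrel.hsym)
next
  case (htrans u v w)
  then show ?case by (blast intro: hrel.htrans)
next
  case (hctx u v a b)
  then show ?case using words_mono by (intro hrel.hctx) auto
next
  case (hcancel g e)
  then show ?case using incl by (intro hrel.hcancel) auto
next
  case (hconj g h)
  then show ?case using incl by (intro hrel.hconj) auto
qed

lemma hat_incl_cls:
  assumes w: "w \<in> lists (E' \<times> UNIV)"
  shows "hat_incl (B.cls w) = A.cls w"
proof (intro equalityI subsetI)
  fix z assume "z \<in> hat_incl (B.cls w)"
  then obtain v where "(w, v) \<in> hrel G E'" "(v, z) \<in> hrel G E"
    unfolding hat_incl_def B.cls_def by blast
  then show "z \<in> A.cls w" unfolding A.cls_def by (blast dest: hrel_mono intro: hrel.htrans)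
next
  fix z assume "z \<in> A.cls w"
  with B.self_in_cls[OF w] show "z \<in> hat_incl (B.cls w)"
    unfolding hat_incl_def A.cls_def by blast
qed

lemma hat_incl_hom: "group_hom (hatG G E') (hatG G E) hat_incl"
proof -
  have "hat_incl \<in> hom (hatG G E') (hatG G E)"
  proof (rule homI)
    fix x assume "x \<in> carrier (hatG G E')"
    then obtain w where w: "w \<in> lists (E' \<times> UNIV)" "x = B.cls w" by (rule B.carrier_hatG_cases)
    moreover have "w \<in> lists (E \<times> UNIV)" using w words_mono by blast
    ultimately show "hat_incl x \<in> carrier (hatG G E)" by (simp add: hat_incl_cls A.cls_in_carrier)
  next
    fix x y assume "x \<in> carrier (hatG G E')" "y \<in> carrier (hatG G E')"
    then obtain u v where uv: "u \<in> lists (E' \<times> UNIV)" "v \<in> lists (E' \<times> UNIV)"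
      and "x = B.cls u" "y = B.cls v"
      by (metis B.carrier_hatG_cases)
    moreover have "u \<in> lists (E \<times> UNIV)" "v \<in> lists (E \<times> UNIV)" using uv words_mono by blast+
    ultimately show "hat_incl (x \<otimes>\<^bsub>hatG G E'\<^esub> y) = hat_incl x \<otimes>\<^bsub>hatG G E\<^esub> hat_incl y"
      by (simp add: hat_incl_cls B.cls_mult A.cls_mult)
  qed
  then show ?thesis
    by (intro group_hom.intro group_hom_axioms.intro A.hat.is_group B.hat.is_group)
qed

lemma hat_beta_hat_incl:
  assumes "Q \<in> carrier (hatG G E')"
  shows "hat_beta G (hat_incl Q) = hat_beta G Q"
proof -
  obtain w where w: "w \<in> lists (E' \<times> UNIV)" "Q = B.cls w"
    using assms by (rule B.carrier_hatG_cases)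
  then have "w \<in> lists (E \<times> UNIV)" using words_mono by auto
  then show ?thesis using w by (simp add: hat_incl_cls A.hat_beta_cls B.hat_beta_cls)
qed

lemma hatG_eq_image_times_kernel:
  assumes gen: "generate G E' = carrier G" and x: "x \<in> carrier (hatG G E)"
  shows "\<exists>k\<in>carrier (hatG G E'). \<exists>z\<in>hat_kernel G E. x = hat_incl k \<otimes>\<^bsub>hatG G E\<^esub> z"
proof -
  interpret beta: group_hom "hatG G E" G "hat_beta G" by (rule A.hat_beta_hom)
  interpret incl: group_hom "hatG G E'" "hatG G E" hat_incl by (rule hat_incl_hom)
  have "hat_beta G x \<in> generate G E'" unfolding gen by (rule beta.hom_closed[OF x])
  then have "hat_beta G x \<in> word_eval G ` lists (E' \<times> UNIV)"
    by (rule subsetD[OF A.generate_subset_word_eval_image[OF B.subset_carrier]])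
  then obtain v where v: "v \<in> lists (E' \<times> UNIV)" and eval_v: "hat_beta G x = word_eval G v"
    by (rule imageE)
  define k where "k = B.cls v"
  have k: "k \<in> carrier (hatG G E')" and beta_k: "hat_beta G (hat_incl k) = hat_beta G x"
    using v eval_v[symmetric] hat_beta_hat_incl[of k]
    by (simp_all add: k_def B.cls_in_carrier B.hat_beta_cls)
  have ik: "hat_incl k \<in> carrier (hatG G E)" using k by (rule incl.hom_closed)
  define z where "z = inv\<^bsub>hatG G E\<^esub> hat_incl k \<otimes>\<^bsub>hatG G E\<^esub> x"
  have zc: "z \<in> carrier (hatG G E)" using ik x by (simp add: z_def)
  have "hat_beta G z = inv (hat_beta G (hat_incl k)) \<otimes> hat_beta G x"
    using ik x by (simp add: z_def)
  also have "\<dots> = \<one>" using beta_k beta.hom_closed[OF x] by simp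
  finally have "z \<in> hat_kernel G E" using zc by (simp add: hat_kernel_def)
  moreover have "x = hat_incl k \<otimes>\<^bsub>hatG G E\<^esub> z"
    using ik x by (simp add: z_def A.hat.m_assoc[symmetric])
  ultimately show ?thesis using k by blast
qed

lemma derived_hatG_eq_image:
  assumes gen: "generate G E' = carrier G"
  shows "derived (hatG G E) (carrier (hatG G E)) = hat_incl ` derived (hatG G E') (carrier (hatG G E'))"
proof -
  interpret incl: group_hom "hatG G E'" "hatG G E" hat_incl by (rule hat_incl_hom)
  have "derived (hatG G E) (carrier (hatG G E)) = derived (hatG G E) (hat_incl ` carrier (hatG G E'))"
  proof (rule A.hat.derived_carrier_eq_if_central_product)
    show "hat_incl ` carrier (hatG G E') \<subseteq> carrier (hatG G E)" by auto
    fix x assume "x \<in> carrier (hatG G E)"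
    with hatG_eq_image_times_kernel[OF gen] obtain k z
      where k: "k \<in> carrier (hatG G E')" and z: "z \<in> hat_kernel G E"
        and x: "x = hat_incl k \<otimes>\<^bsub>hatG G E\<^esub> z"
      by blast
    have "z \<in> carrier (hatG G E)" using z by (simp add: hat_kernel_def)
    moreover have "\<forall>y\<in>carrier (hatG G E). z \<otimes>\<^bsub>hatG G E\<^esub> y = y \<otimes>\<^bsub>hatG G E\<^esub> z"
      using A.hat_kernel_central[OF z] by blast
    ultimately show "\<exists>k\<in>hat_incl ` carrier (hatG G E'). \<exists>z\<in>carrier (hatG G E).
        x = k \<otimes>\<^bsub>hatG G E\<^esub> z \<and> (\<forall>y\<in>carrier (hatG G E). z \<otimes>\<^bsub>hatG G E\<^esub> y = y \<otimes>\<^bsub>hatG G E\<^esub> z)"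
      using k x by blast
  qed
  also have "\<dots> = hat_incl ` derived (hatG G E') (carrier (hatG G E'))"
    by (rule incl.derived_img) simp
  finally show ?thesis .
qed

lemma ambiguity_index_le:
  assumes gen: "generate G E' = carrier G"
  shows "ambiguity_index G E \<le> ambiguity_index G E'"
proof -
  have "hat_kernel G E \<inter> derived (hatG G E) (carrier (hatG G E))
      \<subseteq> hat_incl ` (hat_kernel G E' \<inter> derived (hatG G E') (carrier (hatG G E')))"
  proof
    fix Q assume Q: "Q \<in> hat_kernel G E \<inter> derived (hatG G E) (carrier (hatG G E))"
    then obtain K where K: "K \<in> derived (hatG G E') (carrier (hatG G E'))" "Q = hat_incl K"
      using derived_hatG_eq_image[OF gen] by blast
    then have "K \<in> carrier (hatG G E')" using B.hat.derived_in_carrier by blast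
    then have "K \<in> hat_kernel G E'" using Q K hat_beta_hat_incl by (simp add: hat_kernel_def)
    then show "Q \<in> hat_incl ` (hat_kernel G E' \<inter> derived (hatG G E') (carrier (hatG G E')))"
      using K by blast
  qed
  then show ?thesis unfolding ambiguity_index_def Let_def by (rule enat_card_le_if_subset_image)
qed

end

theorem corollary2p20:
  fixes G :: "('a, 'b) monoid_scheme" and E E' :: "'a set"
  assumes "group G"
    and "equipment G E" and "equipment G E'" and "E' \<subseteq> E"
    and "finite E"
    and "generate G E' = carrier G"
  shows "ambiguity_index G E \<le> ambiguity_index G E'
         \<and> (ambiguity_index G E' = 1 \<longrightarrow> ambiguity_index G E = 1)"
proof -
  interpret conj_invariant_incl G E E'
    using assms(1-4)
    by (intro conj_invariant_incl.intro conj_invariant_incl_axioms.intro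
        group.equipment_imp_conj_invariant)
  have "ambiguity_index G E \<le> ambiguity_index G E'"
    using assms(6) by (rule ambiguity_index_le)
  moreover have "1 \<le> ambiguity_index G E" by (rule A.one_le_ambiguity_index)
  ultimately show ?thesis by auto
qed

end
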